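(* Let $A$ be a commutative ring and $\mathfrak{p}\subseteq A$ a prime ideal. If $A$ is totally $\sigma_{A\setminus\mathfrak{p}}$-artinian, then $\mathfrak{p}$ is a minimal prime ideal of $A$.
   Context: For a multiplicatively closed set $\Sigma\subseteq A$, $\sigma_\Sigma$ is the hereditary torsion theory with Gabriel filter $\mathcal{L}(\sigma_\Sigma)=\{\mathfrak{a}:\mathfrak{a}\cap\Sigma\ne\varnothing\}$. For a hereditary torsion theory $\tau$ with Gabriel filter $\mathcal{L}(\tau)$, $A$ is totally $\tau$-artinian if for every descending chain of ideals $\mathfrak{a}_1\supseteq\mathfrak{a}_2\supseteq\cdots$ there exist $m$ and $\mathfrak{h}\in\mathcal{L}(\tau)$ with $\mathfrak{a}_m\mathfrak{h}\subseteq\mathfrak{a}_s$ for all $s\ge m$. *)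

theory Defs
  imports "HOL-Algebra.Ideal_Product"
begin

text \<open>Gabriel filter of the hereditary torsion theory sigma_Sigma associated with a
  multiplicatively closed subset Sigma of the ring: ideals meeting Sigma.\<close>
definition gabriel_filter_mcs :: "('a, 'b) ring_scheme \<Rightarrow> 'a set \<Rightarrow> 'a set set" where
  "gabriel_filter_mcs R S = {a. ideal a R \<and> a \<inter> S \<noteq> {}}"

definition totally_tau_artinian :: "('a, 'b) ring_scheme \<Rightarrow> 'a set set \<Rightarrow> bool" where
  "totally_tau_artinian R L \<longleftrightarrow>
     (\<forall>a :: nat \<Rightarrow> 'a set. (\<forall>n. ideal (a n) R) \<and> (\<forall>n. a (Suc n) \<subseteq> a n) \<longrightarrow>
        (\<exists>m. \<exists>h \<in> L. \<forall>s \<ge> m. a m \<cdot>\<^bsub>R\<^esub> h \<subseteq> a s))"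

definition minimal_prime :: "'a set \<Rightarrow> ('a, 'b) ring_scheme \<Rightarrow> bool" where
  "minimal_prime P R \<longleftrightarrow> primeideal P R \<and> (\<forall>Q. primeideal Q R \<and> Q \<subseteq> P \<longrightarrow> Q = P)"

end

theory Submission
  imports Defs
begin

text \<open>A prime p is minimal as soon as every x in p satisfies x^n u = 0 for some n and some
  u outside p: a prime Q inside p then contains x^n u but not u. The totally artinian condition,
  applied to the chain of principal ideals (x^n), yields m and t outside p with x^m t = r x^(m+1),
  so u = t - x r works.\<close>

lemma (in primeideal) mem_if_pow_mem:
  assumes "x \<in> carrier R" "x [^] (n::nat) \<in> I"
  shows "x \<in> I"
  using assms(2)
proof (induction n)
  case 0
  then show ?case using one_imp_carrier I_notcarr by simp
next
  case (Suc n)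
  then have "x [^] n \<otimes> x \<in> I" by simp
  then show ?case using Suc.IH I_prime assms(1) by auto
qed

lemma (in cring) cgenideal_pow_Suc_subset:
  assumes "x \<in> carrier R"
  shows "PIdl (x [^] Suc n) \<subseteq> PIdl (x [^] n)"
proof (rule cgenideal_minimal)
  show "ideal (PIdl (x [^] n)) R" by (simp add: assms cgenideal_ideal)
  then show "x [^] Suc n \<in> PIdl (x [^] n)"
    using assms cgenideal_self ideal.I_r_closed by fastforce
qed

lemma (in cring) minimal_primeI:
  assumes P: "primeideal P R"
    and killed: "\<And>x. x \<in> P \<Longrightarrow> \<exists>n u. u \<in> carrier R - P \<and> x [^] (n::nat) \<otimes> u = \<zero>"
  shows "minimal_prime P R"
  unfolding minimal_prime_def
proof (intro conjI allI impI P)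
  interpret P: primeideal P R by (rule P)
  fix Q assume Q: "primeideal Q R \<and> Q \<subseteq> P"
  then interpret Q: primeideal Q R by simp
  have "x \<in> Q" if "x \<in> P" for x
  proof -
    obtain n :: nat and u where u: "u \<in> carrier R - P" "x [^] n \<otimes> u = \<zero>"
      using killed \<open>x \<in> P\<close> by blast
    have x: "x \<in> carrier R" using \<open>x \<in> P\<close> by (rule P.Icarr)
    have "x [^] n \<otimes> u \<in> Q" unfolding u(2) by (rule Q.zero_closed)
    moreover have "u \<notin> Q" using u(1) Q by blast
    ultimately have "x [^] n \<in> Q" using Q.I_prime[of "x [^] n" u] u(1) x by auto
    then show ?thesis using Q.mem_if_pow_mem x by blast
  qed
  with Q show "Q = P" by blast
qed

lemma (in cring) pow_annihilated_outside_prime: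
  assumes P: "primeideal P R" and x: "x \<in> P" and t: "t \<in> carrier R - P"
    and stable: "x [^] n \<otimes> t \<in> PIdl (x [^] Suc n)"
  shows "\<exists>u \<in> carrier R - P. x [^] n \<otimes> u = \<zero>"
proof -
  interpret P: primeideal P R by fact
  have xc: "x \<in> carrier R" using x P.Icarr by blast
  obtain r where r: "r \<in> carrier R" "x [^] n \<otimes> t = r \<otimes> x [^] Suc n"
    using stable unfolding cgenideal_def by blast
  have "x [^] n \<otimes> (x \<otimes> r) = x [^] n \<otimes> t" using xc r by (simp add: m_ac)
  then have "x [^] n \<otimes> (t \<ominus> x \<otimes> r) = \<zero>"
    using xc r t by (simp add: minus_eq r_distr r_minus r_neg)
  moreover have "t \<ominus> x \<otimes> r \<notin> P"
  proof
    assume "t \<ominus> x \<otimes> r \<in> P"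
    moreover have "x \<otimes> r \<in> P" using x r P.I_r_closed by blast
    ultimately have "(t \<ominus> x \<otimes> r) \<oplus> x \<otimes> r \<in> P" by (rule P.a_closed)
    moreover have "(t \<ominus> x \<otimes> r) \<oplus> x \<otimes> r = t" using t xc r by (simp add: minus_eq a_assoc l_neg)
    ultimately show False using t by simp
  qed
  moreover have "t \<ominus> x \<otimes> r \<in> carrier R" using t xc r by simp
  ultimately show ?thesis by blast
qed

lemma (in cring) totally_tau_artinian_pow_stabilizes:
  assumes art: "totally_tau_artinian R (gabriel_filter_mcs R S)" and x: "x \<in> carrier R"
  shows "\<exists>n. \<exists>t \<in> S. x [^] n \<otimes> t \<in> PIdl (x [^] Suc n)"
proof -
  let ?a = "\<lambda>n::nat. PIdl (x [^] n)"
  have "\<forall>n. ideal (?a n) R" by (simp add: x cgenideal_ideal)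
  moreover have "\<forall>n. ?a (Suc n) \<subseteq> ?a n" using cgenideal_pow_Suc_subset[OF x] by blast
  ultimately
  obtain m h where h: "h \<in> gabriel_filter_mcs R S" and mh: "\<forall>s\<ge>m. ?a m \<cdot> h \<subseteq> ?a s"
    using art unfolding totally_tau_artinian_def by (blast dest: spec[of _ ?a])
  obtain t where t: "t \<in> h" "t \<in> S" using h unfolding gabriel_filter_mcs_def by blast
  have "x [^] m \<otimes> t \<in> ?a m \<cdot> h"
    using x t(1) cgenideal_self by (simp add: ideal_prod.prod)
  then have "x [^] m \<otimes> t \<in> ?a (Suc m)" using mh le_SucI order_refl by blast
  then show ?thesis using t(2) by blast
qed

theorem mainTheorem14:
  fixes R (structure)
  assumes "cring R"
    and "primeideal p R"
    and "totally_tau_artinian R (gabriel_filter_mcs R (carrier R - p))"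
  shows "minimal_prime p R"
proof -
  interpret primeideal p R by fact
  show ?thesis
  proof (rule minimal_primeI[OF assms(2)])
    fix x assume x: "x \<in> p"
    then have "x \<in> carrier R" by (rule Icarr)
    then obtain n :: nat and t where "t \<in> carrier R - p" "x [^] n \<otimes> t \<in> PIdl (x [^] Suc n)"
      using totally_tau_artinian_pow_stabilizes[OF assms(3)] by blast
    then obtain u where "u \<in> carrier R - p" "x [^] n \<otimes> u = \<zero>"
      using pow_annihilated_outside_prime[OF assms(2) x] by blast
    then show "\<exists>n u. u \<in> carrier R - p \<and> x [^] (n::nat) \<otimes> u = \<zero>" by blast
  qed
qed

end
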